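(* Let $g$ be a non-trivial non-negative real-valued multiplicative function, uniformly bounded on the primes, for which the series $\sum q^{-1}g(q)$, taken over prime-powers $q=p^k$ with $k\ge2$, converges, and for which the sums $y^{-1}\sum_{q\le y}g(q)\log q$ (over all prime-powers $q\le y$) are uniformly bounded for $y\ge2$. Then \[ \sum_{u<n\le v}\frac{g(n)}{n} \ll \left(\log\Big(\frac{\log v}{\log u}\Big)+\frac{1}{\log x}\right)\sum_{n\le x}\frac{g(n)}{n} \] uniformly for $x^{1/2}\le u\le v\le x^{3/2}$, $x\ge2$.
   Context: Multiplicative means $f(mn)=f(m)f(n)$ whenever $\gcd(m,n)=1$, with $f(1)=1$. $A\ll B$ means $|A|\le KB$ for a constant $K$ (here depending on $g$ but not on $u,v,x$). *)

theory Defs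
  imports Complex_Main "HOL-Number_Theory.Prime_Powers"
begin

definition multiplicative :: "(nat \<Rightarrow> real) \<Rightarrow> bool" where
  "multiplicative f \<longleftrightarrow> f 1 = 1 \<and>
     (\<forall>m n. m > 0 \<longrightarrow> n > 0 \<longrightarrow> coprime m n \<longrightarrow> f (m * n) = f m * f n)"

end

theory Submission
  imports Defs
begin

text \<open>
  Write \<open>S(y) = \<Sum>\<^sub>n\<^sub>\<le>\<^sub>y g(n)/n\<close>. Since \<open>ln n\<close> is the sum of the logarithms of the prime-power
  parts \<open>q\<close> of \<open>n\<close> and \<open>g(n) = g(q) g(n/q)\<close>, the sum of \<open>g(n) ln n / n\<close> over \<open>u < n \<le> v\<close> is at
  most \<open>S(v)\<close> times a sum of \<open>g(q) ln q / q\<close> over an interval of multiplicative length \<open>v/u\<close>;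
  by the Chebyshev-type hypothesis and a dyadic decomposition the latter is \<open>O(ln (v/u) + 1)\<close>.
  Dividing by \<open>ln u\<close> gives \<open>S(v) - S(u) \<ll> (ln (v/u) + 1)/ln u \<cdot> S(v)\<close>. For \<open>ln v \<le> (1 + \<delta>) ln u\<close>
  with small \<open>\<delta>\<close> and large \<open>u\<close> this yields \<open>S(v) \<le> 2 S(u)\<close>, and boundedly many such steps give
  \<open>S(v) \<ll> S(x)\<close> for \<open>v \<le> x\<^sup>3\<^sup>/\<^sup>2\<close>. Finally \<open>(ln v - ln u)/ln u \<le> 3 ln (ln v/ln u)\<close> because
  \<open>ln v/ln u \<le> 3\<close>; small \<open>x\<close> are covered by the term \<open>1/ln x\<close>.
\<close>

definition harmonic_sum :: "(nat \<Rightarrow> real) \<Rightarrow> real \<Rightarrow> real" where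
  "harmonic_sum g y = (\<Sum>n\<in>{n::nat. 1 \<le> n \<and> real n \<le> y}. g n / real n)"

definition harmonic_sum_between :: "(nat \<Rightarrow> real) \<Rightarrow> real \<Rightarrow> real \<Rightarrow> real" where
  "harmonic_sum_between g u v = (\<Sum>n\<in>{n::nat. u < real n \<and> real n \<le> v}. g n / real n)"

lemma finite_nat_le: "finite {n::nat. P n \<and> real n \<le> y}"
proof (rule finite_subset)
  show "{n::nat. P n \<and> real n \<le> y} \<subseteq> {..nat \<lceil>y\<rceil>}"
    by (auto simp: le_nat_iff; linarith)
qed simp

lemma ln_of_nat_nonneg: "0 \<le> ln (real (n::nat))"
  by (cases n) auto

lemma ln_eq_sum_ln_prime_power_parts:
  fixes n :: nat assumes "n > 0"
  shows "ln (real n) = (\<Sum>p\<in>prime_factors n. ln (real (p ^ multiplicity p n)))"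
proof -
  have "real n = (\<Prod>p\<in>prime_factors n. real (p ^ multiplicity p n))"
    using prime_factorization_nat[of n] assms by (metis of_nat_prod)
  also have "ln \<dots> = (\<Sum>p\<in>prime_factors n. ln (real (p ^ multiplicity p n)))"
    by (rule ln_prod) (auto simp: prime_gt_0_nat in_prime_factors_iff)
  finally show ?thesis .
qed

lemma multiplicative_prime_power_split:
  assumes "multiplicative g" and "n > 0" and "prime p"
  shows "g n = g (p ^ multiplicity p n) * g (n div p ^ multiplicity p n)"
proof -
  let ?q = "p ^ multiplicity p n"
  have n: "n = ?q * (n div ?q)" by (simp add: multiplicity_dvd)
  have "\<not> p dvd n div ?q" using assms(2,3) by (intro multiplicity_decompose) auto
  then have "coprime ?q (n div ?q)" using assms(3) by (simp add: prime_imp_coprime)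
  moreover have "?q > 0" using assms(3) prime_gt_0_nat by simp
  moreover have "n div ?q > 0" using assms(2) n by (metis gr0I mult_0_right)
  ultimately show ?thesis
    using assms(1) n unfolding multiplicative_def by metis
qed

lemma inj_on_cofactor_prime_power_part:
  "inj_on (\<lambda>(n, p). (n div p ^ multiplicity p n, p ^ multiplicity p n)) (Sigma (UNIV :: nat set) prime_factors)"
proof (rule inj_onI, clarify)
  fix n p n' p' :: nat
  assume p: "p \<in> prime_factors n" and p': "p' \<in> prime_factors n'"
    and e1: "n div p ^ multiplicity p n = n' div p' ^ multiplicity p' n'"
    and e2: "p ^ multiplicity p n = p' ^ multiplicity p' n'"
  have "prime p" "prime p'" using p p' by auto
  moreover have "multiplicity p n > 0" "multiplicity p' n' > 0"
    using p p' by (auto simp: prime_factors_multiplicity)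
  ultimately have "p = p'" using prime_power_inj'(1)[OF _ _ e2] by blast
  moreover have "n = n'"
    using e1 e2 multiplicity_dvd[of p n] multiplicity_dvd[of p' n'] by (metis dvd_mult_div_cancel)
  ultimately show "n = n' \<and> p = p'" by simp
qed

lemma sum_div_le_dyadic:
  fixes h :: "nat \<Rightarrow> real"
  assumes h: "\<And>q. 0 \<le> h q"
    and H: "\<And>y. y > 0 \<Longrightarrow> (\<Sum>q\<in>{q. P q \<and> real q \<le> y}. h q) \<le> C * y"
  shows "a > 0 \<Longrightarrow> b \<le> 2 ^ k * a \<Longrightarrow>
     (\<Sum>q\<in>{q. P q \<and> a < real q \<and> real q \<le> b}. h q / real q) \<le> 2 * C * k"
proof (induction k arbitrary: a)
  case 0
  then have "{q. P q \<and> a < real q \<and> real q \<le> b} = {}" by auto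
  then show ?case by (simp only:) simp
next
  case (Suc k)
  let ?A = "{q. P q \<and> a < real q \<and> real q \<le> 2 * a}"
  let ?B = "{q. P q \<and> 2 * a < real q \<and> real q \<le> b}"
  have fin: "finite ?A" "finite ?B"
    using finite_nat_le[of "\<lambda>q. P q \<and> _ < real q"] by simp_all
  have "(\<Sum>q\<in>{q. P q \<and> a < real q \<and> real q \<le> b}. h q / real q) \<le> (\<Sum>q\<in>?A \<union> ?B. h q / real q)"
    using fin h by (intro sum_mono2) auto
  also have "\<dots> = (\<Sum>q\<in>?A. h q / real q) + (\<Sum>q\<in>?B. h q / real q)"
    using fin by (intro sum.union_disjoint) auto
  also have "(\<Sum>q\<in>?A. h q / real q) \<le> (\<Sum>q\<in>?A. h q) / a"
    unfolding sum_divide_distrib using Suc.prems h by (intro sum_mono divide_left_mono) auto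
  also have "(\<Sum>q\<in>?A. h q) \<le> (\<Sum>q\<in>{q. P q \<and> real q \<le> 2 * a}. h q)"
    using h finite_nat_le by (intro sum_mono2) auto
  also have "\<dots> \<le> C * (2 * a)" using H[of "2 * a"] Suc.prems by simp
  also have "(\<Sum>q\<in>?B. h q / real q) \<le> 2 * C * k"
    using Suc.IH[of "2 * a"] Suc.prems by (simp add: mult_ac)
  finally show ?case using Suc.prems by (simp add: divide_right_mono field_simps)
qed

lemma sum_div_le_log:
  fixes h :: "nat \<Rightarrow> real"
  assumes h: "\<And>q. 0 \<le> h q"
    and H: "\<And>y. y > 0 \<Longrightarrow> (\<Sum>q\<in>{q. P q \<and> real q \<le> y}. h q) \<le> C * y"
    and C: "C \<ge> 0" and a: "a > 0" and ab: "a \<le> b"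
  shows "(\<Sum>q\<in>{q. P q \<and> a < real q \<and> real q \<le> b}. h q / real q) \<le> 2 * C * (ln (b / a) / ln 2 + 1)"
proof -
  define k where "k = nat \<lceil>log 2 (b / a)\<rceil>"
  have ba: "b / a \<ge> 1" using a ab by simp
  then have "log 2 (b / a) \<ge> 0" by simp
  then have k: "log 2 (b / a) \<le> real k" "real k \<le> log 2 (b / a) + 1"
    unfolding k_def by linarith+
  have "b / a = 2 powr (log 2 (b / a))" using ba by simp
  also have "\<dots> \<le> 2 ^ k" using k by (simp add: powr_realpow[symmetric])
  finally have "b \<le> 2 ^ k * a" using a by (simp add: field_simps)
  then have "(\<Sum>q\<in>{q. P q \<and> a < real q \<and> real q \<le> b}. h q / real q) \<le> 2 * C * k"
    using sum_div_le_dyadic[OF h H a] by blast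
  also have "\<dots> \<le> 2 * C * (log 2 (b / a) + 1)" using k C by (intro mult_left_mono) auto
  finally show ?thesis by (simp add: log_def)
qed

lemma prime_power_part_factorization:
  assumes "p \<in> prime_factors n"
  shows "primepow (p ^ multiplicity p n)" "n div p ^ multiplicity p n > 0"
    "real n = real (p ^ multiplicity p n) * real (n div p ^ multiplicity p n)"
proof -
  have "prime p" "multiplicity p n > 0" using assms by (auto simp: prime_factors_multiplicity)
  then show "primepow (p ^ multiplicity p n)" by (auto simp: primepow_def)
  show n: "real n = real (p ^ multiplicity p n) * real (n div p ^ multiplicity p n)"
    by (metis multiplicity_dvd dvd_mult_div_cancel of_nat_mult)
  have "n > 0" using assms by (auto intro!: gr0I)
  then have "p ^ multiplicity p n \<le> n" by (intro dvd_imp_le multiplicity_dvd)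
  then show "n div p ^ multiplicity p n > 0"
    using \<open>prime p\<close> by (simp add: div_greater_zero_iff prime_gt_0_nat)
qed

lemma weighted_ln_eq_sum_over_prime_factors:
  fixes g :: "nat \<Rightarrow> real"
  assumes mult: "multiplicative g" and n: "n > 0"
  shows "g n * ln (real n) / real n =
    (\<Sum>p\<in>prime_factors n. let q = p ^ multiplicity p n; m = n div q in
       (g m / real m) * (g q * ln (real q) / real q))"
proof -
  have "g n * ln (real n) / real n =
      (\<Sum>p\<in>prime_factors n. g n * ln (real (p ^ multiplicity p n)) / real n)"
    by (simp add: ln_eq_sum_ln_prime_power_parts[OF n] sum_distrib_left sum_divide_distrib)
  also have "\<dots> = (\<Sum>p\<in>prime_factors n. let q = p ^ multiplicity p n; m = n div q in
       (g m / real m) * (g q * ln (real q) / real q))"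
  proof (rule sum.cong[OF refl])
    fix p assume p: "p \<in> prime_factors n"
    define q where "q = p ^ multiplicity p n"
    note factors = prime_power_part_factorization[OF p, folded q_def]
    have "prime p" using p by auto
    have "real q > 0" using factors(1) primepow_gt_0_nat by simp
    with factors show "g n * ln (real q) / real n = (let q = q; m = n div q in
       (g m / real m) * (g q * ln (real q) / real q))"
      using multiplicative_prime_power_split[OF mult n \<open>prime p\<close>, folded q_def]
      by (simp add: field_simps Let_def)
  qed
  finally show ?thesis .
qed

lemma sum_weighted_ln_le_double_sum:
  fixes g :: "nat \<Rightarrow> real"
  assumes mult: "multiplicative g" and nonneg: "\<And>n. g n \<ge> 0" and u: "u > 0"
  shows "(\<Sum>n\<in>{n::nat. u < real n \<and> real n \<le> v}. g n * ln (real n) / real n)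
    \<le> (\<Sum>m\<in>{m. 1 \<le> m \<and> real m \<le> v}. (g m / real m) *
          (\<Sum>q\<in>{q. primepow q \<and> u / real m < real q \<and> real q \<le> v / real m}. g q * ln (real q) / real q))"
proof -
  define N where "N = {n::nat. u < real n \<and> real n \<le> v}"
  define M where "M = {m::nat. 1 \<le> m \<and> real m \<le> v}"
  define Q where "Q = (\<lambda>m::nat. {q::nat. primepow q \<and> u / real m < real q \<and> real q \<le> v / real m})"
  define F where "F = (\<lambda>(m::nat, q::nat). (g m / real m) * (g q * ln (real q) / real q))"
  define \<phi> where "\<phi> = (\<lambda>(n::nat, p::nat). (n div p ^ multiplicity p n, p ^ multiplicity p n))"
  have fin: "finite N" "finite M" "\<And>m. finite (Q m)"
    unfolding N_def M_def Q_def using finite_nat_le[of "\<lambda>q. primepow q \<and> _ < real q"]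
    by (auto intro: finite_nat_le)
  have "\<phi> (n, p) \<in> Sigma M Q" if n: "n \<in> N" and p: "p \<in> prime_factors n" for n p
  proof -
    define q where "q = p ^ multiplicity p n"
    note factors = prime_power_part_factorization[OF p, folded q_def]
    have m: "real (n div q) > 0" using factors(2) by simp
    have "n div q \<le> n" by (rule div_le_dividend)
    moreover have "u < real n" "real n \<le> v" using n unfolding N_def by auto
    ultimately have "real (n div q) \<le> v" by linarith
    moreover have "u / real (n div q) < real q" "real q \<le> v / real (n div q)"
      using \<open>u < real n\<close> \<open>real n \<le> v\<close> factors(3) m
      by (simp_all add: pos_divide_less_eq pos_le_divide_eq)
    ultimately have "(n div q, q) \<in> Sigma M Q"
      using factors(1,2) unfolding M_def Q_def by simp
    then show ?thesis unfolding \<phi>_def q_def by simp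
  qed
  then have \<phi>_image: "\<phi> ` Sigma N prime_factors \<subseteq> Sigma M Q"
    by (intro image_subsetI) (auto elim!: SigmaE)
  have "(\<Sum>n\<in>N. g n * ln (real n) / real n) = (\<Sum>n\<in>N. \<Sum>p\<in>prime_factors n. F (\<phi> (n, p)))"
  proof (rule sum.cong[OF refl])
    fix n assume "n \<in> N"
    then have "n > 0" using u unfolding N_def by (auto intro!: gr0I)
    then show "g n * ln (real n) / real n = (\<Sum>p\<in>prime_factors n. F (\<phi> (n, p)))"
      using weighted_ln_eq_sum_over_prime_factors[OF mult] by (simp add: F_def \<phi>_def Let_def)
  qed
  also have "\<dots> = (\<Sum>x\<in>Sigma N prime_factors. F (\<phi> x))"
    using sum.Sigma[OF fin(1), of prime_factors "\<lambda>n p. F (\<phi> (n, p))"] by (simp add: case_prod_unfold)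
  also have "\<dots> = (\<Sum>x\<in>\<phi> ` Sigma N prime_factors. F x)"
  proof -
    have "inj_on \<phi> (Sigma N prime_factors)"
      by (rule inj_on_subset[OF inj_on_cofactor_prime_power_part[folded \<phi>_def]]) auto
    then show ?thesis by (simp add: sum.reindex comp_def)
  qed
  also have "\<dots> \<le> (\<Sum>x\<in>Sigma M Q. F x)"
  proof (rule sum_mono2[OF _ \<phi>_image])
    show "finite (Sigma M Q)" using fin by simp
    show "0 \<le> F x" for x
      using nonneg ln_of_nat_nonneg unfolding F_def by (simp add: case_prod_unfold)
  qed
  also have "\<dots> = (\<Sum>m\<in>M. \<Sum>q\<in>Q m. F (m, q))"
    using sum.Sigma[OF fin(2), of Q "\<lambda>m q. F (m, q)"] fin(3) by (simp add: case_prod_unfold)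
  also have "\<dots> = (\<Sum>m\<in>M. (g m / real m) * (\<Sum>q\<in>Q m. g q * ln (real q) / real q))"
    unfolding F_def by (simp add: sum_distrib_left)
  finally show ?thesis unfolding N_def M_def Q_def .
qed

lemma sum_weighted_ln_le:
  fixes g :: "nat \<Rightarrow> real"
  assumes mult: "multiplicative g" and nonneg: "\<And>n. g n \<ge> 0"
    and H: "\<And>y. y > 0 \<Longrightarrow> (\<Sum>q\<in>{q. primepow q \<and> real q \<le> y}. g q * ln (real q)) \<le> C * y"
    and C: "C \<ge> 0" and u: "u > 0" and uv: "u \<le> v"
  shows "(\<Sum>n\<in>{n::nat. u < real n \<and> real n \<le> v}. g n * ln (real n) / real n)
     \<le> 2 * C * (ln (v / u) / ln 2 + 1) * harmonic_sum g v"
proof -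
  define B where "B = 2 * C * (ln (v / u) / ln 2 + 1)"
  have inner: "(\<Sum>q\<in>{q. primepow q \<and> u / real m < real q \<and> real q \<le> v / real m}. g q * ln (real q) / real q)
      \<le> B" if m: "real m > 0" for m
  proof -
    have "(\<Sum>q\<in>{q. primepow q \<and> u / real m < real q \<and> real q \<le> v / real m}. g q * ln (real q) / real q)
        \<le> 2 * C * (ln ((v / m) / (u / m)) / ln 2 + 1)"
    proof (rule sum_div_le_log[OF _ H C])
      show "0 \<le> g q * ln (real q)" for q using nonneg ln_of_nat_nonneg by simp
      show "0 < u / real m" "u / real m \<le> v / real m"
        using u uv m by (simp_all add: divide_right_mono)
    qed
    then show ?thesis using m unfolding B_def by simp
  qed
  have "(\<Sum>n\<in>{n::nat. u < real n \<and> real n \<le> v}. g n * ln (real n) / real n)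
    \<le> (\<Sum>m\<in>{m. 1 \<le> m \<and> real m \<le> v}. (g m / real m) *
          (\<Sum>q\<in>{q. primepow q \<and> u / real m < real q \<and> real q \<le> v / real m}. g q * ln (real q) / real q))"
    by (rule sum_weighted_ln_le_double_sum[OF mult nonneg u])
  also have "\<dots> \<le> (\<Sum>m\<in>{m. 1 \<le> m \<and> real m \<le> v}. (g m / real m) * B)"
    using inner nonneg by (intro sum_mono mult_left_mono) auto
  also have "\<dots> = B * harmonic_sum g v" by (simp add: harmonic_sum_def sum_distrib_left mult_ac)
  finally show ?thesis unfolding B_def .
qed

lemma harmonic_sum_nonneg: "(\<And>n. g n \<ge> 0) \<Longrightarrow> harmonic_sum g y \<ge> 0"
  unfolding harmonic_sum_def by (intro sum_nonneg) auto

lemma harmonic_sum_between_nonneg: "(\<And>n. g n \<ge> 0) \<Longrightarrow> harmonic_sum_between g u v \<ge> 0"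
  unfolding harmonic_sum_between_def by (intro sum_nonneg) auto

lemma harmonic_sum_mono: "(\<And>n. g n \<ge> 0) \<Longrightarrow> y \<le> z \<Longrightarrow> harmonic_sum g y \<le> harmonic_sum g z"
  unfolding harmonic_sum_def by (rule sum_mono2) (auto intro: finite_nat_le)

lemma harmonic_sum_ge_1:
  assumes "multiplicative g" "\<And>n. g n \<ge> 0" "y \<ge> 1"
  shows "harmonic_sum g y \<ge> 1"
proof -
  have "(\<Sum>n\<in>{1::nat}. g n / real n) \<le> harmonic_sum g y"
    unfolding harmonic_sum_def using assms(2,3) by (intro sum_mono2) (auto intro: finite_nat_le)
  then show ?thesis using assms(1) by (simp add: multiplicative_def)
qed

lemma harmonic_sum_between_le_harmonic_sum:
  "(\<And>n. g n \<ge> 0) \<Longrightarrow> u \<ge> 0 \<Longrightarrow> harmonic_sum_between g u v \<le> harmonic_sum g v"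
  unfolding harmonic_sum_between_def harmonic_sum_def
  by (rule sum_mono2) (auto intro: finite_nat_le)

lemma harmonic_sum_split:
  assumes "u \<ge> 0" "u \<le> v"
  shows "harmonic_sum g v = harmonic_sum g u + harmonic_sum_between g u v"
proof -
  have "{n::nat. 1 \<le> n \<and> real n \<le> v} =
      {n. 1 \<le> n \<and> real n \<le> u} \<union> {n. u < real n \<and> real n \<le> v}"
    using assms by auto
  then show ?thesis
    unfolding harmonic_sum_def harmonic_sum_between_def
    by (simp only:) (rule sum.union_disjoint; auto intro: finite_nat_le)
qed

lemma harmonic_sum_between_le:
  fixes g :: "nat \<Rightarrow> real"
  assumes mult: "multiplicative g" and nonneg: "\<And>n. g n \<ge> 0"
    and H: "\<And>y. y > 0 \<Longrightarrow> (\<Sum>q\<in>{q. primepow q \<and> real q \<le> y}. g q * ln (real q)) \<le> C * y"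
    and C: "C \<ge> 0" and u: "u > 1" and uv: "u \<le> v"
  shows "harmonic_sum_between g u v \<le> (2 * C / ln 2) * (ln v - ln u + 1) / ln u * harmonic_sum g v"
proof -
  have lu: "ln u > 0" using u by simp
  have "harmonic_sum_between g u v * ln u =
      (\<Sum>n\<in>{n::nat. u < real n \<and> real n \<le> v}. g n * ln u / real n)"
    unfolding harmonic_sum_between_def by (simp add: sum_distrib_right)
  also have "\<dots> \<le> (\<Sum>n\<in>{n::nat. u < real n \<and> real n \<le> v}. g n * ln (real n) / real n)"
    using u nonneg by (intro sum_mono divide_right_mono mult_left_mono) auto
  also have "\<dots> \<le> 2 * C * (ln (v / u) / ln 2 + 1) * harmonic_sum g v"
    using u uv by (intro sum_weighted_ln_le[OF mult nonneg H C]) auto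
  also have "\<dots> \<le> (2 * C / ln 2) * (ln v - ln u + 1) * harmonic_sum g v"
  proof (intro mult_right_mono harmonic_sum_nonneg[of g, OF nonneg])
    have "ln (2::real) \<le> 1" using ln_le_minus_one[of 2] by simp
    then have "ln (v / u) / ln 2 + 1 \<le> ln (v / u) / ln 2 + 1 / ln 2"
      by (simp add: field_simps)
    also have "\<dots> = (ln v - ln u + 1) / ln 2"
      using u uv by (simp add: ln_div add_divide_distrib)
    finally have "ln (v / u) / ln 2 + 1 \<le> (ln v - ln u + 1) / ln 2" .
    then have "2 * C * (ln (v / u) / ln 2 + 1) \<le> 2 * C * ((ln v - ln u + 1) / ln 2)"
      using C by (intro mult_left_mono) auto
    then show "2 * C * (ln (v / u) / ln 2 + 1) \<le> (2 * C / ln 2) * (ln v - ln u + 1)"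
      by simp
  qed
  finally show ?thesis using lu by (simp add: field_simps)
qed

lemma harmonic_sum_doubling:
  fixes g :: "nat \<Rightarrow> real"
  assumes nonneg: "\<And>n. g n \<ge> 0"
    and bound: "\<And>w v. 1 < w \<Longrightarrow> w \<le> v \<Longrightarrow>
      harmonic_sum_between g w v \<le> M * (ln v - ln w + 1) / ln w * harmonic_sum g v"
    and M: "M > 0" and w: "w > 1" "ln w \<ge> 4 * M" and wv: "w \<le> v"
    and lv: "ln v \<le> (1 + 1 / (4 * M)) * ln w"
  shows "harmonic_sum g v \<le> 2 * harmonic_sum g w"
proof -
  have "M * (ln v - ln w) \<le> ln w / 4" using lv M by (simp add: field_simps)
  then have "M * (ln v - ln w + 1) / ln w \<le> 1 / 2" using w by (simp add: field_simps)
  then have "M * (ln v - ln w + 1) / ln w * harmonic_sum g v \<le> 1 / 2 * harmonic_sum g v"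
    by (rule mult_right_mono) (rule harmonic_sum_nonneg[of g, OF nonneg])
  then show ?thesis using bound[OF w(1) wv] harmonic_sum_split[where u = w and v = v and g = g] w wv by linarith
qed

text \<open>Each step passes through \<open>max x e\<close> with \<open>ln e = ln v / (1 + 1/(4M))\<close>.\<close>

lemma harmonic_sum_growth:
  fixes g :: "nat \<Rightarrow> real"
  assumes nonneg: "\<And>n. g n \<ge> 0"
    and bound: "\<And>w v. 1 < w \<Longrightarrow> w \<le> v \<Longrightarrow>
      harmonic_sum_between g w v \<le> M * (ln v - ln w + 1) / ln w * harmonic_sum g v"
    and M: "M > 0" and x: "x > 1" "ln x \<ge> 4 * M"
  shows "v > 0 \<Longrightarrow> ln v \<le> (1 + 1 / (4 * M)) ^ k * ln x \<Longrightarrow>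
    harmonic_sum g v \<le> 2 ^ k * harmonic_sum g x"
proof (induction k arbitrary: v)
  case 0
  then show ?case using x harmonic_sum_mono[of g, OF nonneg] by simp
next
  case (Suc k)
  define d where "d = 1 / (4 * M)"
  have d: "d > 0" and lx: "ln x > 0" using M x unfolding d_def by auto
  have Sx: "harmonic_sum g x \<le> 2 ^ k * harmonic_sum g x"
    using harmonic_sum_nonneg[of g x, OF nonneg] by (simp add: mult_le_cancel_right1)
  show ?case
  proof (cases "v \<le> x")
    case True
    then show ?thesis
      using harmonic_sum_mono[of g, OF nonneg True] Sx harmonic_sum_nonneg[of g x, OF nonneg] by simp
  next
    case False
    define w where "w = max x (exp (ln v / (1 + d)))"
    have "x \<le> w" unfolding w_def by simp
    then have "w > 1" "ln x \<le> ln w" using x by auto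
    then have w: "w > 1" "ln w \<ge> 4 * M" using x by linarith+
    have "ln v / (1 + d) \<le> ln v" using d False x by (simp add: field_simps)
    then have "exp (ln v / (1 + d)) \<le> v" using Suc.prems(1) by (metis exp_le_cancel_iff exp_ln)
    then have wv: "w \<le> v" using False unfolding w_def by simp
    have "ln (exp (ln v / (1 + d))) \<le> ln w" unfolding w_def by (rule ln_mono) auto
    then have "ln v \<le> (1 + d) * ln w" using d by (simp add: field_simps)
    then have "harmonic_sum g v \<le> 2 * harmonic_sum g w"
      using harmonic_sum_doubling[OF nonneg bound M w wv] unfolding d_def by blast
    moreover have "ln w \<le> (1 + d) ^ k * ln x"
    proof -
      have "ln x \<le> (1 + d) ^ k * ln x" using d lx by simp
      moreover have "ln v / (1 + d) \<le> (1 + d) ^ k * ln x"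
        using Suc.prems(2) d unfolding d_def[symmetric] by (simp add: field_simps)
      ultimately show ?thesis unfolding w_def max_def by auto
    qed
    then have "harmonic_sum g w \<le> 2 ^ k * harmonic_sum g x"
      using Suc.IH[of w] w unfolding d_def by simp
    ultimately show ?thesis by simp
  qed
qed

lemma diff_one_le_mult_ln:
  fixes r c :: real assumes "1 \<le> r" "r \<le> c"
  shows "r - 1 \<le> c * ln r"
proof -
  have "ln (1 / r) \<le> 1 / r - 1" using assms by (intro ln_le_minus_one) auto
  then have "1 - 1 / r \<le> ln r" using assms by (simp add: ln_div)
  moreover have "(r - 1) / c \<le> (r - 1) / r" using assms by (intro divide_left_mono) auto
  moreover have "(r - 1) / r = 1 - 1 / r" using assms by (simp add: field_simps)
  ultimately have "(r - 1) / c \<le> ln r" by linarith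
  then show ?thesis using assms by (simp add: field_simps)
qed

lemma chebyshev_bound_all_pos:
  fixes g :: "nat \<Rightarrow> real"
  assumes "\<And>y. y \<ge> 2 \<Longrightarrow> (1 / y) * (\<Sum>q\<in>{q. primepow q \<and> real q \<le> y}. g q * ln (real q)) \<le> C0"
  obtains C where "C > 0"
    "\<And>y. y > 0 \<Longrightarrow> (\<Sum>q\<in>{q. primepow q \<and> real q \<le> y}. g q * ln (real q)) \<le> C * y"
proof
  fix y :: real assume y: "y > 0"
  show "(\<Sum>q\<in>{q. primepow q \<and> real q \<le> y}. g q * ln (real q)) \<le> (max C0 0 + 1) * y"
  proof (cases "y < 2")
    case True
    then have "{q. primepow q \<and> real q \<le> y} = {}"
      using primepow_gt_Suc_0 by fastforce
    then show ?thesis using y by (simp only:) simp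
  next
    case False
    then have "(\<Sum>q\<in>{q. primepow q \<and> real q \<le> y}. g q * ln (real q)) \<le> C0 * y"
      using assms[of y] by (simp add: field_simps)
    also have "\<dots> \<le> (max C0 0 + 1) * y" using y by (intro mult_right_mono) auto
    finally show ?thesis .
  qed
qed simp

lemma ln_bounds_in_range:
  fixes x u v :: real
  assumes x: "x > 1" and u: "sqrt x \<le> u" and uv: "u \<le> v" and v: "v \<le> x powr (3 / 2)"
  shows "u > 1" "ln x / 2 \<le> ln u" "ln u \<le> ln v" "ln v \<le> 3 / 2 * ln x"
proof -
  have "sqrt x > 1" using x by simp
  then show u1: "u > 1" using u by linarith
  then show "ln u \<le> ln v" using uv by simp
  have "ln (sqrt x) \<le> ln u" using u x u1 by (subst ln_le_cancel_iff) auto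
  then show "ln x / 2 \<le> ln u" using x by (simp add: ln_sqrt)
  have "ln v \<le> ln (x powr (3 / 2))" using v u1 uv by (subst ln_le_cancel_iff) auto
  then show "ln v \<le> 3 / 2 * ln x" using x by (simp add: ln_powr)
qed

lemma harmonic_sum_between_le_large_x:
  fixes g :: "nat \<Rightarrow> real"
  assumes nonneg: "\<And>n. g n \<ge> 0"
    and bound: "\<And>w v. 1 < w \<Longrightarrow> w \<le> v \<Longrightarrow>
      harmonic_sum_between g w v \<le> M * (ln v - ln w + 1) / ln w * harmonic_sum g v"
    and M: "M > 0" and N: "3 / 2 \<le> (1 + 1 / (4 * M)) ^ N"
    and x: "x > 1" "ln x \<ge> 4 * M"
    and u: "sqrt x \<le> u" and uv: "u \<le> v" and v: "v \<le> x powr (3 / 2)"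
  shows "harmonic_sum_between g u v \<le> 3 * M * 2 ^ N * (ln (ln v / ln u) + 1 / ln x) * harmonic_sum g x"
proof -
  note range = ln_bounds_in_range[OF x(1) u uv v]
  have lx: "ln x > 0" and lu: "ln u > 0" using x range by auto
  have ratio: "ln v / ln u \<le> 3" using range lu by (simp add: field_simps)
  have "3 / (3 * ln u) \<le> 3 / ln x" using range lx by (intro divide_left_mono) auto
  then have inv_lu: "1 / ln u \<le> 3 / ln x" by simp
  have "(ln v - ln u + 1) / ln u = (ln v / ln u - 1) + 1 / ln u"
    using lu by (simp add: field_simps)
  also have "\<dots> \<le> 3 * (ln (ln v / ln u) + 1 / ln x)"
    using diff_one_le_mult_ln[of "ln v / ln u" 3] ratio inv_lu lu range by simp
  finally have "M * ((ln v - ln u + 1) / ln u) \<le> M * (3 * (ln (ln v / ln u) + 1 / ln x))"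
    by (rule mult_left_mono) (use M in simp)
  then have coeff: "M * (ln v - ln u + 1) / ln u \<le> 3 * M * (ln (ln v / ln u) + 1 / ln x)"
    by (simp add: mult_ac)
  have "3 / 2 * ln x \<le> (1 + 1 / (4 * M)) ^ N * ln x" using N lx by (intro mult_right_mono) auto
  then have "ln v \<le> (1 + 1 / (4 * M)) ^ N * ln x" using range by linarith
  then have growth: "harmonic_sum g v \<le> 2 ^ N * harmonic_sum g x"
    using range uv by (intro harmonic_sum_growth[OF nonneg bound M x]) auto
  have "harmonic_sum_between g u v \<le> M * (ln v - ln u + 1) / ln u * harmonic_sum g v"
    using bound range uv by blast
  also have "\<dots> \<le> 3 * M * (ln (ln v / ln u) + 1 / ln x) * harmonic_sum g v"
    using coeff harmonic_sum_nonneg[of g, OF nonneg] by (rule mult_right_mono)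
  also have "\<dots> \<le> 3 * M * (ln (ln v / ln u) + 1 / ln x) * (2 ^ N * harmonic_sum g x)"
    using growth M range lx by (intro mult_left_mono) auto
  finally show ?thesis by (simp only: ac_simps)
qed

lemma harmonic_sum_between_le_small_x:
  fixes g :: "nat \<Rightarrow> real"
  assumes mult: "multiplicative g" and nonneg: "\<And>n. g n \<ge> 0"
    and x: "x > 1" "ln x \<le> c"
    and u: "sqrt x \<le> u" and uv: "u \<le> v" and v: "v \<le> x powr (3 / 2)"
  shows "harmonic_sum_between g u v
    \<le> c * harmonic_sum g (exp c powr (3 / 2)) * (ln (ln v / ln u) + 1 / ln x) * harmonic_sum g x"
proof -
  define Q where "Q = harmonic_sum g (exp c powr (3 / 2))"
  note range = ln_bounds_in_range[OF x(1) u uv v]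
  have lx: "ln x > 0" using x by simp
  have "c \<ge> 0" using x lx by linarith
  then have cQ: "c * Q \<ge> 0"
    using harmonic_sum_nonneg[of g, OF nonneg] unfolding Q_def by simp
  have "x \<le> exp c" using x exp_le_cancel_iff[of "ln x" c] by simp
  then have "x powr (3 / 2) \<le> exp c powr (3 / 2)" using x by (intro powr_mono2) auto
  then have "harmonic_sum g v \<le> Q"
    unfolding Q_def using v by (intro harmonic_sum_mono[of g, OF nonneg]) auto
  then have "harmonic_sum_between g u v \<le> Q"
    using range harmonic_sum_between_le_harmonic_sum[of g u v, OF nonneg] by simp
  also have "\<dots> \<le> c * Q * (1 / ln x)"
  proof -
    have "ln x * Q \<le> c * Q"
      using x harmonic_sum_nonneg[of g, OF nonneg] unfolding Q_def by (intro mult_right_mono) auto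
    then show ?thesis using lx by (simp add: field_simps)
  qed
  also have "\<dots> \<le> c * Q * (ln (ln v / ln u) + 1 / ln x)"
    using cQ range by (intro mult_left_mono) auto
  also have "\<dots> \<le> c * Q * (ln (ln v / ln u) + 1 / ln x) * harmonic_sum g x"
  proof -
    have "0 \<le> c * Q * (ln (ln v / ln u) + 1 / ln x)" using cQ range lx by simp
    moreover have "1 \<le> harmonic_sum g x" using harmonic_sum_ge_1[OF mult nonneg] x by simp
    ultimately show ?thesis using mult_left_mono by fastforce
  qed
  finally show ?thesis unfolding Q_def .
qed

lemma harmonic_sum_between_bound:
  fixes g :: "nat \<Rightarrow> real"
  assumes mult: "multiplicative g" and nonneg: "\<And>n. g n \<ge> 0"
    and H: "\<And>y. y > 0 \<Longrightarrow> (\<Sum>q\<in>{q. primepow q \<and> real q \<le> y}. g q * ln (real q)) \<le> C * y"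
    and C: "C > 0"
  obtains K where "\<And>x u v. x \<ge> 2 \<Longrightarrow> sqrt x \<le> u \<Longrightarrow> u \<le> v \<Longrightarrow> v \<le> x powr (3 / 2) \<Longrightarrow>
    harmonic_sum_between g u v \<le> K * (ln (ln v / ln u) + 1 / ln x) * harmonic_sum g x"
proof -
  define M where "M = 2 * C / ln 2"
  have M: "M > 0" using C unfolding M_def by simp
  note bound = harmonic_sum_between_le[OF mult nonneg H less_imp_le[OF C], folded M_def]
  have "1 < 1 + 1 / (4 * M)" using M by simp
  then obtain N where "3 / 2 < (1 + 1 / (4 * M)) ^ N" using real_arch_pow by blast
  then have N: "3 / 2 \<le> (1 + 1 / (4 * M)) ^ N" by simp
  define K where "K = max (3 * M * 2 ^ N) (4 * M * harmonic_sum g (exp (4 * M) powr (3 / 2)))"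
  have K: "3 * M * 2 ^ N \<le> K" "4 * M * harmonic_sum g (exp (4 * M) powr (3 / 2)) \<le> K"
    unfolding K_def by simp_all
  have "harmonic_sum_between g u v \<le> K * (ln (ln v / ln u) + 1 / ln x) * harmonic_sum g x"
    if x: "x \<ge> 2" and u: "sqrt x \<le> u" and uv: "u \<le> v" and v: "v \<le> x powr (3 / 2)" for x u v
  proof -
    have "x > 1" using x by simp
    then have "0 \<le> ln (ln v / ln u) + 1 / ln x" "0 \<le> harmonic_sum g x"
      using ln_bounds_in_range[OF _ u uv v] harmonic_sum_nonneg[of g, OF nonneg] by auto
    then have scale: "K' * (ln (ln v / ln u) + 1 / ln x) * harmonic_sum g x
        \<le> K * (ln (ln v / ln u) + 1 / ln x) * harmonic_sum g x" if "K' \<le> K" for K'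
      using that by (intro mult_right_mono) auto
    show ?thesis
    proof (cases "ln x \<le> 4 * M")
      case True
      then show ?thesis
        using harmonic_sum_between_le_small_x[OF mult nonneg \<open>x > 1\<close> True u uv v]
          scale[OF K(2)] by (simp only: ac_simps)
    next
      case False
      then show ?thesis
        using harmonic_sum_between_le_large_x[OF nonneg bound M N \<open>x > 1\<close> _ u uv v]
          scale[OF K(1)] by simp
    qed
  qed
  then show ?thesis by (rule that)
qed

theorem lemma3:
  fixes g :: "nat \<Rightarrow> real"
  assumes mult: "multiplicative g"
    and nonneg: "\<And>n. g n \<ge> 0"
    and bdd_primes: "\<exists>B. \<forall>p. prime p \<longrightarrow> g p \<le> B"
    and higher_pp: "summable (\<lambda>q. if (\<exists>p k. prime p \<and> k \<ge> 2 \<and> q = p ^ k)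
                                      then g q / real q else 0)"
    and chebyshev: "\<exists>C. \<forall>y::real. y \<ge> 2 \<longrightarrow>
              (1 / y) * (\<Sum>q\<in>{q::nat. primepow q \<and> real q \<le> y}. g q * ln (real q)) \<le> C"
  shows "\<exists>K. \<forall>x u v :: real. x \<ge> 2 \<and> sqrt x \<le> u \<and> u \<le> v \<and> v \<le> x powr (3/2) \<longrightarrow>
            \<bar>\<Sum>n\<in>{n::nat. u < real n \<and> real n \<le> v}. g n / real n\<bar>
              \<le> K * (ln (ln v / ln u) + 1 / ln x) *
                  (\<Sum>n\<in>{n::nat. 1 \<le> n \<and> real n \<le> x}. g n / real n)"
proof -
  obtain C0 where "\<And>y. y \<ge> 2 \<Longrightarrow>
      (1 / y) * (\<Sum>q\<in>{q::nat. primepow q \<and> real q \<le> y}. g q * ln (real q)) \<le> C0"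
    using chebyshev by blast
  then obtain C where "C > 0"
    and "\<And>y. y > 0 \<Longrightarrow> (\<Sum>q\<in>{q. primepow q \<and> real q \<le> y}. g q * ln (real q)) \<le> C * y"
    using chebyshev_bound_all_pos by blast
  then obtain K where K: "\<And>x u v. x \<ge> 2 \<Longrightarrow> sqrt x \<le> u \<Longrightarrow> u \<le> v \<Longrightarrow> v \<le> x powr (3 / 2) \<Longrightarrow>
      harmonic_sum_between g u v \<le> K * (ln (ln v / ln u) + 1 / ln x) * harmonic_sum g x"
    using harmonic_sum_between_bound[OF mult nonneg] by blast
  show ?thesis
  proof (intro exI allI impI, elim conjE)
    fix x u v :: real
    assume "x \<ge> 2" "sqrt x \<le> u" "u \<le> v" "v \<le> x powr (3 / 2)"
    then show "\<bar>\<Sum>n\<in>{n::nat. u < real n \<and> real n \<le> v}. g n / real n\<bar>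
        \<le> K * (ln (ln v / ln u) + 1 / ln x) * (\<Sum>n\<in>{n::nat. 1 \<le> n \<and> real n \<le> x}. g n / real n)"
      using K harmonic_sum_between_nonneg[of g u v, OF nonneg]
      unfolding harmonic_sum_between_def harmonic_sum_def by simp
  qed
qed

end
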